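(* Let $G$ be a connected (finite, simple) graph, let $\mathcal{F}$ be a maximum induced forest of $G$ having the fewest connected components among all maximum induced forests of $G$, let $H$ be the contracted graph and let $B$ be a skeleton of $H$ whose configuration vector is lexicographically highest among all skeletons of $H$ (all as defined in the context). Let $B_1$ be the inner skeleton. Let $v$ be a non-tree vertex and let $x_{T_1}$ be a tree vertex that is a descendant of $v$ in $B_1$. If $vx_{T_1}$ is a 2-edge of $H$, then $x_{T_1}$ is a child of $v$ in $B_1$.
   Context: A maximum induced forest of $G$ is an induced forest with the maximum number of vertices. Let $\mathcal{T}$ be the set of connected components (trees) of $\mathcal{F}$ and $S=V(G)\setminus V(\mathcal{F})$. The graph $H$ has vertex set $\{x_T : T\in\mathcal{T}\}\cup S$ (the $x_T$ are tree vertices, the vertices of $S$ non-tree vertices) and edge set consisting of all edges of $G[S]$ together with all pairs $ux_T$ with $u\in S$, $T\in\mathcal{T}$ such that $u$ has at least one neighbor in $V(T)$ in $G$. An edge $ux_T$ of $H$ is a 2-edge if $u$ has at least two neighbors in $V(T)$ in $G$; all other edges of $H$ are 1-edges. A skeleton is a spanning tree of $H$ rooted at some tree vertex, with all edges directed towards the root. For a skeleton $B$ with root $r$, the level $\ell_B(v)$ of a vertex $v$ is the number of vertices on the path from $v$ to $r$ in $B$ (so $\ell_B(r)=1$), and the configuration vector of $B$ is $\langle |E_2(B)|, \sum_{v:\ell_B(v)=1}\deg_B(v), \sum_{v:\ell_B(v)=2}\deg_B(v),\ldots,\sum_{v:\ell_B(v)=|V(H)|}\deg_B(v)\rangle$,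 where $E_2(B)$ is the set of 2-edges of $B$ and $\deg_B(v)$ is the total (in plus out) degree of $v$ in $B$. Let $L_S$ be the set of vertices of $S$ that are leaves of $B$; the inner skeleton is $B_1=B[V(B)\setminus L_S]$. Parent, child and descendant refer to the rooted in-arborescence $B_1$ (edges directed from child to parent). *)

theory Defs
  imports Main
begin

(* Simple graphs are given by a vertex set V and a set E of edges, each edge
   being a two-element set {u,w}. *)

definition walk :: "'v set \<Rightarrow> 'v set set \<Rightarrow> 'v list \<Rightarrow> bool" where
  "walk V E xs \<longleftrightarrow> xs \<noteq> [] \<and> set xs \<subseteq> V \<and>
     (\<forall>i. Suc i < length xs \<longrightarrow> {xs ! i, xs ! Suc i} \<in> E)"

definition gpath :: "'v set \<Rightarrow> 'v set set \<Rightarrow> 'v list \<Rightarrow> bool" where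
  "gpath V E xs \<longleftrightarrow> walk V E xs \<and> distinct xs"

definition reachable :: "'v set \<Rightarrow> 'v set set \<Rightarrow> 'v \<Rightarrow> 'v \<Rightarrow> bool" where
  "reachable V E u w \<longleftrightarrow> (\<exists>xs. walk V E xs \<and> hd xs = u \<and> last xs = w)"

definition gconnected :: "'v set \<Rightarrow> 'v set set \<Rightarrow> bool" where
  "gconnected V E \<longleftrightarrow> (\<forall>u\<in>V. \<forall>w\<in>V. reachable V E u w)"

definition has_cycle :: "'v set \<Rightarrow> 'v set set \<Rightarrow> bool" where
  "has_cycle V E \<longleftrightarrow> (\<exists>xs. gpath V E xs \<and> 3 \<le> length xs \<and> {last xs, hd xs} \<in> E)"

definition induced_edges :: "'v set set \<Rightarrow> 'v set \<Rightarrow> 'v set set" where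
  "induced_edges E X = {e \<in> E. e \<subseteq> X}"

definition induced_forest :: "'v set \<Rightarrow> 'v set set \<Rightarrow> 'v set \<Rightarrow> bool" where
  "induced_forest V E X \<longleftrightarrow> X \<subseteq> V \<and> \<not> has_cycle X (induced_edges E X)"

definition components :: "'v set \<Rightarrow> 'v set set \<Rightarrow> 'v set set" where
  "components V E = {{w \<in> V. reachable V E u w} | u. u \<in> V}"

definition is_tree :: "'v set \<Rightarrow> 'v set set \<Rightarrow> bool" where
  "is_tree V E \<longleftrightarrow> gconnected V E \<and> \<not> has_cycle V E"

definition forest_trees :: "'v set set \<Rightarrow> 'v set \<Rightarrow> 'v set set" where
  "forest_trees E F = components F (induced_edges E F)"

(* The graph H: tree vertex x_T is Inl T, non-tree vertex u \<in> S is Inr u *)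
definition H_vertices :: "'v set \<Rightarrow> 'v set set \<Rightarrow> 'v set \<Rightarrow> ('v set + 'v) set" where
  "H_vertices V E F = Inl ` forest_trees E F \<union> Inr ` (V - F)"

definition H_edges :: "'v set \<Rightarrow> 'v set set \<Rightarrow> 'v set \<Rightarrow> ('v set + 'v) set set" where
  "H_edges V E F =
     {{Inr u, Inr w} | u w. u \<in> V - F \<and> w \<in> V - F \<and> {u, w} \<in> E} \<union>
     {{Inr u, Inl T} | u T. u \<in> V - F \<and> T \<in> forest_trees E F \<and> (\<exists>t\<in>T. {u, t} \<in> E)}"

definition two_edges :: "'v set \<Rightarrow> 'v set set \<Rightarrow> 'v set \<Rightarrow> ('v set + 'v) set set" where
  "two_edges V E F =
     {{Inr u, Inl T} | u T. u \<in> V - F \<and> T \<in> forest_trees E F \<and> 2 \<le> card {t \<in> T. {u, t} \<in> E}}"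

definition skeleton :: "'v set \<Rightarrow> 'v set set \<Rightarrow> 'v set \<Rightarrow> ('v set + 'v) set set \<Rightarrow> ('v set + 'v) \<Rightarrow> bool" where
  "skeleton V E F B r \<longleftrightarrow> B \<subseteq> H_edges V E F \<and> is_tree (H_vertices V E F) B
     \<and> r \<in> Inl ` forest_trees E F"

definition tree_path :: "'w set \<Rightarrow> 'w set set \<Rightarrow> 'w \<Rightarrow> 'w \<Rightarrow> 'w list" where
  "tree_path VB B v r = (THE xs. gpath VB B xs \<and> hd xs = v \<and> last xs = r)"

definition level :: "'w set \<Rightarrow> 'w set set \<Rightarrow> 'w \<Rightarrow> 'w \<Rightarrow> nat" where
  "level VB B r v = length (tree_path VB B v r)"

definition deg :: "'w set set \<Rightarrow> 'w \<Rightarrow> nat" where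
  "deg B v = card {e \<in> B. v \<in> e}"

definition config :: "'v set \<Rightarrow> 'v set set \<Rightarrow> 'v set \<Rightarrow> ('v set + 'v) set set \<Rightarrow> ('v set + 'v) \<Rightarrow> nat list" where
  "config V E F B r =
     card (B \<inter> two_edges V E F) #
     map (\<lambda>i. \<Sum>w\<in>{w \<in> H_vertices V E F. level (H_vertices V E F) B r w = i}. deg B w)
         [1..<card (H_vertices V E F) + 1]"

definition inner_vertices :: "'v set \<Rightarrow> 'v set set \<Rightarrow> 'v set \<Rightarrow> ('v set + 'v) set set \<Rightarrow> ('v set + 'v) set" where
  "inner_vertices V E F B = H_vertices V E F - {w \<in> Inr ` (V - F). deg B w = 1}"

definition inner_edges :: "'v set \<Rightarrow> 'v set set \<Rightarrow> 'v set \<Rightarrow> ('v set + 'v) set set \<Rightarrow> ('v set + 'v) set set" where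
  "inner_edges V E F B = {e \<in> B. e \<subseteq> inner_vertices V E F B}"

definition descendant :: "'w set \<Rightarrow> 'w set set \<Rightarrow> 'w \<Rightarrow> 'w \<Rightarrow> 'w \<Rightarrow> bool" where
  "descendant VB B1 r v x \<longleftrightarrow> x \<in> VB \<and> v \<in> VB \<and> x \<noteq> v \<and> v \<in> set (tree_path VB B1 x r)"

definition child :: "'w set \<Rightarrow> 'w set set \<Rightarrow> 'w \<Rightarrow> 'w \<Rightarrow> 'w \<Rightarrow> bool" where
  "child VB B1 r v x \<longleftrightarrow> x \<in> VB \<and> v \<in> VB \<and> 2 \<le> length (tree_path VB B1 x r)
     \<and> tree_path VB B1 x r ! 1 = v"

end

theory Submission
  imports Defs
begin

(*
  Suppose the parent p of x = x_T1 is not v. Interior vertices of a path in B have degree at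
  least 2, so the path from x to the root avoids the non-tree leaves deleted in B_1: B and B_1
  have the same path from x to the root, and v is a proper ancestor of p. Exchanging the edge
  x p of B for the 2-edge v x hangs the subtree of x from v. The result is again a skeleton
  with at least as many 2-edges; vertices of level at most l(v) keep their level, and since x
  and p lie deeper than v, the degree sums of the levels 1, ..., l(v) - 1 are unchanged while
  that of level l(v) grows by one. So the configuration vector increases lexicographically,
  contradicting the choice of B.
*)

section \<open>Walks and paths\<close>

lemma walk_Nil [simp]: "\<not> walk V E []"
  by (simp add: walk_def)

lemma walk_single [simp]: "walk V E [a] \<longleftrightarrow> a \<in> V"
  by (simp add: walk_def)

lemma walk_Cons_Cons [simp]:
  "walk V E (a # b # xs) \<longleftrightarrow> a \<in> V \<and> {a, b} \<in> E \<and> walk V E (b # xs)"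
  unfolding walk_def by (auto simp: less_Suc_eq_0_disj All_less_Suc2)

lemma walk_hd_in: "walk V E (a # xs) \<Longrightarrow> a \<in> V"
  by (cases xs) auto

lemma walk_ConsD: "walk V E (a # xs) \<Longrightarrow> xs \<noteq> [] \<Longrightarrow> walk V E xs"
  by (cases xs) auto

lemma walk_append_iff:
  "walk V E (xs @ y # ys) \<longleftrightarrow> walk V E (xs @ [y]) \<and> walk V E (y # ys)"
  by (induction xs rule: induct_list012) (auto dest: walk_hd_in)

lemma walk_rev: "walk V E xs \<Longrightarrow> walk V E (rev xs)"
proof (induction xs rule: induct_list012)
  case (3 a b xs)
  then have "walk V E (rev xs @ [b])" by simp
  moreover have "walk V E [b, a]"
    using "3.prems" walk_hd_in[of V E b xs] by (simp add: insert_commute)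
  ultimately show ?case using walk_append_iff[of V E "rev xs" b "[a]"] by simp
qed simp_all

lemma walk_mono: "walk V E xs \<Longrightarrow> V \<subseteq> V' \<Longrightarrow> E \<subseteq> E' \<Longrightarrow> walk V' E' xs"
  unfolding walk_def by blast

lemma walk_edge: "walk V E xs \<Longrightarrow> Suc i < length xs \<Longrightarrow> {xs ! i, xs ! Suc i} \<in> E"
  unfolding walk_def by blast

lemma walk_Diff_edge:
  assumes "walk V E xs" "\<not> {a, b} \<subseteq> set xs"
  shows "walk V (E - {{a, b}}) xs"
  using assms unfolding walk_def by (metis Diff_iff doubleton_eq_iff empty_subsetI insert_subset nth_mem singletonD Suc_lessD)

lemma walk_to_gpath:
  "walk V E xs \<Longrightarrow> \<exists>ys. gpath V E ys \<and> hd ys = hd xs \<and> last ys = last xs"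
proof (induction "length xs" arbitrary: xs rule: less_induct)
  case less
  show ?case
  proof (cases "distinct xs")
    case True
    then show ?thesis using less.prems unfolding gpath_def by blast
  next
    case False
    then obtain A M C y where xs: "xs = A @ [y] @ M @ [y] @ C"
      using not_distinct_decomp by blast
    then have "walk V E (A @ y # C)"
      using less.prems walk_append_iff[of V E A y "M @ y # C"] walk_append_iff[of V E "A @ y # M" y C]
        walk_append_iff[of V E A y C] by simp
    moreover have "length (A @ y # C) < length xs" using xs by simp
    ultimately obtain ys where "gpath V E ys" "hd ys = hd (A @ y # C)" "last ys = last (A @ y # C)"
      using less.hyps by blast
    moreover have "hd (A @ y # C) = hd xs" "last (A @ y # C) = last xs"
      using xs by (cases A; simp)+
    ultimately show ?thesis by metis
  qed
qed

lemma gconnected_if_walks_to: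
  assumes "\<forall>w\<in>V. \<exists>xs. walk V E xs \<and> hd xs = w \<and> last xs = r"
  shows "gconnected V E"
  unfolding gconnected_def reachable_def
proof (intro ballI)
  fix u w assume "u \<in> V" "w \<in> V"
  then obtain xu xw where xu: "walk V E xu" "hd xu = u" "last xu = r"
    and xw: "walk V E xw" "hd xw = w" "last xw = r"
    using assms by meson
  have "xu \<noteq> []" "rev xw \<noteq> []"
    using xu xw by (auto simp: walk_def)
  then obtain U W where U: "xu = U @ [r]" and W: "rev xw = r # W"
    using xu(3) xw(3) by (metis append_butlast_last_id hd_rev list.collapse)
  have "walk V E (U @ r # W)"
    using walk_append_iff[of V E U r W] xu(1) walk_rev[OF xw(1)] U W by simp
  moreover have "hd (U @ r # W) = u"
    using xu(2) U by (cases U) auto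
  moreover have "last (U @ r # W) = w"
    using xw(2) W by (metis last_appendR last_rev list.distinct(1))
  ultimately show "\<exists>xs. walk V E xs \<and> hd xs = u \<and> last xs = w" by blast
qed

lemma two_le_deg:
  assumes "finite E" "{y, a} \<in> E" "{y, b} \<in> E" "a \<noteq> b"
  shows "2 \<le> deg E y"
proof -
  have "card {{y, a}, {y, b}} = 2"
    using assms(4) by (auto simp: doubleton_eq_iff)
  moreover have "card {{y, a}, {y, b}} \<le> card {e \<in> E. y \<in> e}"
    using assms(1-3) by (intro card_mono) auto
  ultimately show ?thesis
    by (simp add: deg_def)
qed

lemma gpath_interior_deg:
  assumes "finite E" "gpath V E xs" "y \<in> set xs" "y \<noteq> hd xs" "y \<noteq> last xs"
  shows "2 \<le> deg E y"
proof -
  obtain i where i: "i < length xs" "y = xs ! i"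
    using assms(3) by (auto simp: in_set_conv_nth)
  have "xs \<noteq> []"
    using assms(3) by auto
  then have "i \<noteq> 0" "Suc i \<noteq> length xs"
    using assms(4,5) i by (metis hd_conv_nth, metis last_conv_nth diff_Suc_1)
  then have "{xs ! (i - 1), y} \<in> E" "{y, xs ! Suc i} \<in> E" "xs ! (i - 1) \<noteq> xs ! Suc i"
    using assms(2) i walk_edge[of V E xs "i - 1"] walk_edge[of V E xs i]
    by (auto simp: gpath_def nth_eq_iff_index_eq)
  then show ?thesis
    using two_le_deg[OF assms(1)] by (metis insert_commute)
qed

section \<open>Cycles\<close>

lemma has_cycle_if_gpaths_diverge:
  assumes gx: "gpath V E (a # b # xs)" and gy: "gpath V E (a # c # ys)"
    and ends: "last (b # xs) = last (c # ys)" and "b \<noteq> c"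
  shows "has_cycle V E"
proof -
  have common: "\<exists>z\<in>set (b # xs). z \<in> set (c # ys)"
    using ends by (metis last_in_set list.distinct(1))
  obtain P z R1 where xsp: "b # xs = P @ z # R1" and "z \<in> set (c # ys)"
    and P: "\<forall>y\<in>set P. y \<notin> set (c # ys)"
    using split_list_first_prop[OF common] by blast
  then obtain Q R2 where ysp: "c # ys = Q @ z # R2"
    by (meson split_list)
  define cyc where "cyc = (a # P) @ z # rev Q"
  have "walk V E ((a # P) @ [z])"
    using gx xsp walk_append_iff[of V E "a # P" z R1] by (simp add: gpath_def)
  moreover have "walk V E (Q @ [z])"
    using gy ysp walk_append_iff[of V E "a # Q" z R2] walk_ConsD[of V E a "Q @ [z]"]
    by (simp add: gpath_def)
  then have "walk V E (z # rev Q)"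
    using walk_rev by fastforce
  ultimately have "walk V E cyc"
    using walk_append_iff[of V E "a # P" z "rev Q"] by (simp add: cyc_def)
  moreover have "distinct cyc"
    using gx gy xsp ysp P by (auto simp: cyc_def gpath_def)
  moreover have "3 \<le> length cyc"
    using xsp ysp \<open>b \<noteq> c\<close> by (cases P; cases Q) (auto simp: cyc_def)
  moreover have "last cyc = c"
    using ysp by (cases Q) (auto simp: cyc_def)
  then have "{last cyc, hd cyc} \<in> E"
    using gy by (simp add: cyc_def gpath_def insert_commute)
  ultimately show ?thesis
    unfolding has_cycle_def gpath_def by blast
qed

lemma gpath_unique:
  assumes acyclic: "\<not> has_cycle V E"
  shows "gpath V E xs \<Longrightarrow> gpath V E ys \<Longrightarrow> hd xs = hd ys \<Longrightarrow> last xs = last ys \<Longrightarrow> xs = ys"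
proof (induction xs arbitrary: ys)
  case Nil
  then show ?case by (simp add: gpath_def)
next
  case (Cons a xs)
  obtain ys' where ys: "ys = a # ys'"
    using Cons.prems by (cases ys) (auto simp: gpath_def)
  show ?case
  proof (cases "xs = [] \<or> ys' = []")
    case True
    then show ?thesis
      using Cons.prems ys by (auto simp: gpath_def split: if_splits dest: last_in_set)
  next
    case False
    then obtain b xt c yt where xs: "xs = b # xt" and ys': "ys' = c # yt"
      by (meson neq_Nil_conv)
    have "gpath V E xs" "gpath V E ys'" "last xs = last ys'"
      using Cons.prems ys xs ys' by (simp_all add: gpath_def)
    moreover have "b = c"
      using has_cycle_if_gpaths_diverge[of V E a b xt c yt] Cons.prems ys xs ys' acyclic by auto
    ultimately have "xs = ys'"
      using xs ys' by (intro Cons.IH) simp_all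
    then show ?thesis
      using ys by simp
  qed
qed

lemma has_cycle_neighbours:
  assumes "has_cycle V E"
  obtains C where "finite C" "C \<noteq> {}"
    "\<And>y. y \<in> C \<Longrightarrow> \<exists>a\<in>C. \<exists>b\<in>C. a \<noteq> b \<and> {y, a} \<in> E \<and> {y, b} \<in> E"
proof -
  obtain xs where g: "gpath V E xs" and l3: "3 \<le> length xs" and cl: "{last xs, hd xs} \<in> E"
    using assms unfolding has_cycle_def by blast
  have "xs \<noteq> []"
    using l3 by auto
  define n where "n = length xs"
  define nxt where "nxt i = (if Suc i < n then Suc i else 0)" for i
  define prv where "prv i = (if i = 0 then n - 1 else i - 1)" for i
  have nxt_edge: "{xs ! i, xs ! nxt i} \<in> E" if "i < n" for i
  proof (cases "Suc i < n")
    case True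
    then show ?thesis using g walk_edge[of V E xs i] by (simp add: gpath_def nxt_def n_def)
  next
    case False
    then have "i = n - 1"
      using that by simp
    then have "xs ! i = last xs" "xs ! nxt i = hd xs"
      using False \<open>xs \<noteq> []\<close> by (auto simp: nxt_def n_def last_conv_nth hd_conv_nth)
    then show ?thesis using cl by simp
  qed
  have "\<exists>a\<in>set xs. \<exists>b\<in>set xs. a \<noteq> b \<and> {y, a} \<in> E \<and> {y, b} \<in> E" if y: "y \<in> set xs" for y
  proof -
    obtain i where i: "i < n" "y = xs ! i"
      using y by (auto simp: in_set_conv_nth n_def)
    have idx: "nxt i \<noteq> prv i" "nxt i < n" "prv i < n"
      using i(1) l3 by (auto simp: nxt_def prv_def n_def)
    have "{y, xs ! nxt i} \<in> E"
      using nxt_edge[OF i(1)] i(2) by simp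
    moreover have "{y, xs ! prv i} \<in> E"
      using nxt_edge[OF idx(3)] i l3 by (auto simp: prv_def nxt_def n_def insert_commute)
    moreover have "xs ! nxt i \<noteq> xs ! prv i"
      using g idx by (simp add: gpath_def nth_eq_iff_index_eq n_def)
    moreover have "xs ! nxt i \<in> set xs" "xs ! prv i \<in> set xs"
      using idx by (simp_all add: n_def)
    ultimately show ?thesis by blast
  qed
  with \<open>xs \<noteq> []\<close> show ?thesis
    by (intro that[of "set xs"]) auto
qed

lemma no_cycle_if_edges_descend:
  fixes d :: "'a \<Rightarrow> nat"
  assumes descend: "\<forall>e\<in>E. \<exists>w. e = {w, f w} \<and> d (f w) < d w"
  shows "\<not> has_cycle V E"
proof
  assume "has_cycle V E"
  then obtain C where C: "finite C" "C \<noteq> {}"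
    and nb: "\<And>y. y \<in> C \<Longrightarrow> \<exists>a\<in>C. \<exists>b\<in>C. a \<noteq> b \<and> {y, a} \<in> E \<and> {y, b} \<in> E"
    by (rule has_cycle_neighbours) blast
  have "Max (d ` C) \<in> d ` C"
    using C by simp
  then obtain y where y: "y \<in> C" "d y = Max (d ` C)"
    by (metis imageE)
  have to_f: "a = f y" if a: "a \<in> C" and ya: "{y, a} \<in> E" for a
  proof -
    obtain w where w: "{y, a} = {w, f w}" "d (f w) < d w"
      using descend ya by blast
    have "d a \<le> d y"
      using y C(1) a by simp
    then show ?thesis
      using w by (auto simp: doubleton_eq_iff)
  qed
  obtain a b where "a \<in> C" "b \<in> C" "a \<noteq> b" "{y, a} \<in> E" "{y, b} \<in> E"
    using nb[OF y(1)] by blast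
  then show False
    using to_f by metis
qed

section \<open>Rooted trees\<close>

locale rooted_tree =
  fixes VB :: "'w set" and B :: "'w set set" and r :: 'w
  assumes edges_proper: "B \<subseteq> {{a, b} | a b. a \<in> VB \<and> b \<in> VB \<and> a \<noteq> b}"
    and tree: "is_tree VB B"
    and root_in: "r \<in> VB"
begin

abbreviation root_path :: "'w \<Rightarrow> 'w list" where
  "root_path w \<equiv> tree_path VB B w r"

abbreviation depth :: "'w \<Rightarrow> nat" where
  "depth w \<equiv> level VB B r w"

(* For the root itself this is an unspecified value. *)
definition parent :: "'w \<Rightarrow> 'w" where
  "parent w = root_path w ! 1"

lemma depth_eq_length: "depth w = length (root_path w)"
  by (simp add: level_def)

lemma root_path_eqI:
  assumes "gpath VB B xs" "hd xs = w" "last xs = r"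
  shows "root_path w = xs"
  unfolding tree_path_def
proof (rule the_equality)
  show "gpath VB B xs \<and> hd xs = w \<and> last xs = r"
    using assms by simp
  fix ys assume "gpath VB B ys \<and> hd ys = w \<and> last ys = r"
  then show "ys = xs"
    using gpath_unique[of VB B ys xs] tree assms by (simp add: is_tree_def)
qed

lemma root_path:
  assumes "w \<in> VB"
  shows "gpath VB B (root_path w)" "hd (root_path w) = w" "last (root_path w) = r"
proof -
  obtain xs where "walk VB B xs" "hd xs = w" "last xs = r"
    using tree assms root_in by (auto simp: is_tree_def gconnected_def reachable_def)
  then obtain ys where "gpath VB B ys" "hd ys = w" "last ys = r"
    using walk_to_gpath by metis
  then show "gpath VB B (root_path w)" "hd (root_path w) = w" "last (root_path w) = r"
    using root_path_eqI by simp_all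
qed

lemma root_path_Cons:
  assumes "w \<in> VB"
  obtains t where "root_path w = w # t"
  using root_path[OF assms] by (metis gpath_def hd_Cons_tl walk_Nil)

lemma set_root_path_subset: "w \<in> VB \<Longrightarrow> set (root_path w) \<subseteq> VB"
  using root_path(1) by (auto simp: gpath_def walk_def)

lemma root_path_root [simp]: "root_path r = [r]"
  using root_in by (intro root_path_eqI) (simp_all add: gpath_def)

lemma root_path_split:
  assumes "w \<in> VB" "root_path w = A @ y # C"
  shows "root_path y = y # C"
proof -
  have "gpath VB B (y # C)"
    using root_path(1)[OF assms(1)] walk_append_iff[of VB B A y C] by (simp add: assms(2) gpath_def)
  moreover have "last (y # C) = r"
    using root_path(3)[OF assms(1)] by (simp add: assms(2))
  ultimately show ?thesis
    by (simp add: root_path_eqI)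
qed

lemma root_path_suffix:
  assumes "w \<in> VB" "y \<in> set (root_path w)"
  obtains A where "root_path w = A @ root_path y"
  using assms root_path_split by (metis split_list)

lemma depth_le_if_in_root_path:
  "w \<in> VB \<Longrightarrow> y \<in> set (root_path w) \<Longrightarrow> depth y \<le> depth w"
  by (metis root_path_suffix depth_eq_length length_append le_add2)

lemma depth_less_if_in_root_path:
  assumes "w \<in> VB" "y \<in> set (root_path w)" "y \<noteq> w"
  shows "depth y < depth w"
proof -
  obtain A where A: "root_path w = A @ root_path y"
    using root_path_suffix assms(1,2) by blast
  have "y \<in> VB"
    using set_root_path_subset assms(1,2) by blast
  then have "A \<noteq> []"
    using A root_path(2) assms by (metis append_Nil)
  then show ?thesis
    by (simp add: A depth_eq_length)
qed

lemma root_path_parent: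
  assumes "w \<in> VB" "w \<noteq> r"
  shows "root_path w = w # root_path (parent w)" "parent w \<in> VB"
proof -
  obtain t where t: "root_path w = w # t"
    using root_path_Cons assms(1) by blast
  then have "t \<noteq> []"
    using root_path(3)[OF assms(1)] assms(2) by auto
  moreover have "gpath VB B t" "last t = r"
    using root_path[OF assms(1)] t \<open>t \<noteq> []\<close> by (auto simp: gpath_def dest: walk_ConsD)
  ultimately have "root_path (hd t) = t"
    by (simp add: root_path_eqI)
  then show "root_path w = w # root_path (parent w)" "parent w \<in> VB"
    using t \<open>t \<noteq> []\<close> set_root_path_subset[OF assms(1)] by (auto simp: parent_def hd_conv_nth)
qed

lemma depth_parent: "w \<in> VB \<Longrightarrow> w \<noteq> r \<Longrightarrow> depth w = depth (parent w) + 1"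
  using root_path_parent(1) by (metis depth_eq_length length_Cons Suc_eq_plus1)

lemma in_root_path_parent:
  assumes "w \<in> VB" "y \<in> set (root_path w)" "y \<noteq> w"
  shows "w \<noteq> r" "y \<in> set (root_path (parent w))"
proof -
  show "w \<noteq> r"
    using assms by auto
  then show "y \<in> set (root_path (parent w))"
    using root_path_parent[OF assms(1)] assms(2,3) by (metis set_ConsD)
qed

lemma parent_if_not_in_root_path:
  assumes "{a, b} \<in> B" "a \<in> VB" "b \<in> VB" "a \<notin> set (root_path b)"
  shows "a \<noteq> r" "parent a = b"
proof -
  obtain t where t: "root_path b = b # t"
    using root_path_Cons assms(3) by blast
  have "gpath VB B (a # root_path b)"
    using root_path(1)[OF assms(3)] assms by (simp add: t gpath_def)
  then have "root_path a = a # root_path b"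
    using root_path(3)[OF assms(3)] t by (intro root_path_eqI) auto
  then show "a \<noteq> r" "parent a = b"
    using t by (auto simp: parent_def)
qed

lemma edge_to_parent:
  assumes "e \<in> B"
  obtains w where "w \<in> VB" "w \<noteq> r" "e = {w, parent w}"
proof -
  obtain a b where ab: "e = {a, b}" "a \<in> VB" "b \<in> VB" "a \<noteq> b"
    using edges_proper assms by blast
  have "a \<notin> set (root_path b) \<or> b \<notin> set (root_path a)"
    using depth_less_if_in_root_path[of a b] depth_less_if_in_root_path[of b a] ab by auto
  then consider "a \<notin> set (root_path b)" | "b \<notin> set (root_path a)"
    by blast
  then show ?thesis
  proof cases
    case 1
    then show ?thesis
      using that parent_if_not_in_root_path[of a b] ab assms by auto
  next
    case 2
    then show ?thesis
      using that parent_if_not_in_root_path[of b a] ab assms by (auto simp: insert_commute)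
  qed
qed

lemma depth_bounds:
  assumes "finite VB" "w \<in> VB"
  shows "1 \<le> depth w" "depth w \<le> card VB"
proof -
  obtain t where "root_path w = w # t"
    using root_path_Cons assms(2) by blast
  then show "1 \<le> depth w"
    by (simp add: depth_eq_length)
  have "depth w = card (set (root_path w))"
    using root_path(1)[OF assms(2)] by (simp add: depth_eq_length gpath_def distinct_card)
  then show "depth w \<le> card VB"
    using card_mono[OF assms(1) set_root_path_subset[OF assms(2)]] by simp
qed

lemma finite_edges: "finite VB \<Longrightarrow> finite B"
  by (rule finite_subset[of _ "Pow VB"]) (use edges_proper in auto)

lemma not_in_root_path_of_ancestor:
  assumes "x \<in> VB" "x \<noteq> r" "v \<in> set (root_path (parent x))"
  shows "x \<notin> set (root_path v)"
proof
  assume "x \<in> set (root_path v)"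
  moreover obtain A where "root_path (parent x) = A @ root_path v"
    using root_path_suffix root_path_parent(2) assms by blast
  ultimately have "x \<in> set (root_path (parent x))"
    by simp
  then show False
    using root_path(1)[OF assms(1)] root_path_parent(1)[OF assms(1,2)] by (simp add: gpath_def)
qed

lemma descendant_via_root_path:
  assumes path: "tree_path VB1 B1 x r = root_path x" and desc: "descendant VB1 B1 r v x"
    and "x \<in> VB"
  shows "x \<noteq> r" "v \<in> set (root_path (parent x))" "child VB1 B1 r v x \<longleftrightarrow> v = parent x"
proof -
  have "v \<in> set (root_path x)" "x \<noteq> v"
    using desc path by (simp_all add: descendant_def)
  then show x_not_root: "x \<noteq> r" and "v \<in> set (root_path (parent x))"
    using in_root_path_parent[OF \<open>x \<in> VB\<close>] by metis+
  obtain t where "root_path (parent x) = parent x # t"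
    using root_path_Cons root_path_parent(2)[OF \<open>x \<in> VB\<close> x_not_root] by blast
  then have "2 \<le> length (root_path x)"
    using root_path_parent(1)[OF \<open>x \<in> VB\<close> x_not_root] by simp
  then show "child VB1 B1 r v x \<longleftrightarrow> v = parent x"
    using desc path by (auto simp: child_def descendant_def parent_def)
qed

lemma root_path_low_degree:
  assumes "finite VB" "w \<in> VB" "y \<in> set (root_path w)" "deg B y < 2"
  shows "y = w \<or> y = r"
  using gpath_interior_deg[OF finite_edges[OF assms(1)] root_path(1)[OF assms(2)] assms(3)]
    root_path(2,3)[OF assms(2)] assms(4) by fastforce

lemma tree_path_remove_leaves:
  assumes "finite VB" "\<forall>y\<in>L. deg B y < 2" "w \<in> VB - L" "r \<notin> L"
  shows "tree_path (VB - L) {e \<in> B. e \<subseteq> VB - L} w r = root_path w"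
  unfolding tree_path_def[of "VB - L"]
proof (rule the_equality)
  have path_sub: "set (root_path w) \<subseteq> VB - L"
    using root_path_low_degree[OF assms(1)] set_root_path_subset assms by blast
  moreover have "{root_path w ! i, root_path w ! Suc i} \<in> {e \<in> B. e \<subseteq> VB - L}"
    if i: "Suc i < length (root_path w)" for i
  proof -
    have "root_path w ! i \<in> VB - L" "root_path w ! Suc i \<in> VB - L"
      using path_sub i by (meson Suc_lessD nth_mem subsetD)+
    then show ?thesis
      using i walk_edge[of VB B "root_path w" i] root_path(1)[of w] assms(3)
      by (auto simp: gpath_def)
  qed
  ultimately show "gpath (VB - L) {e \<in> B. e \<subseteq> VB - L} (root_path w) \<and> hd (root_path w) = w \<and> last (root_path w) = r"
    using root_path[of w] assms(3) by (auto simp: gpath_def walk_def)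
  fix ys assume "gpath (VB - L) {e \<in> B. e \<subseteq> VB - L} ys \<and> hd ys = w \<and> last ys = r"
  then have "gpath VB B ys" "hd ys = w" "last ys = r"
    by (auto simp: gpath_def elim: walk_mono)
  then show "ys = root_path w"
    by (simp add: root_path_eqI)
qed

end

section \<open>Hanging a subtree from another vertex\<close>

definition rehang :: "'w set set \<Rightarrow> 'w \<Rightarrow> 'w \<Rightarrow> 'w \<Rightarrow> 'w set set" where
  "rehang B x p v = insert {v, x} (B - {{x, p}})"

lemma card_Int_rehang_ge:
  assumes "finite B" "{v, x} \<in> T" "{v, x} \<notin> B"
  shows "card (B \<inter> T) \<le> card (rehang B x p v \<inter> T)"
proof -
  have "rehang B x p v \<inter> T = insert {v, x} ((B \<inter> T) - {{x, p}})"
    using assms(2) by (auto simp: rehang_def)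
  moreover have "card (B \<inter> T) \<le> Suc (card ((B \<inter> T) - {{x, p}}))"
    using assms(1) by (cases "{x, p} \<in> B \<inter> T") (simp_all add: card_Suc_Diff1)
  ultimately show ?thesis
    using assms(1,3) by simp
qed

lemma lexord_map_upt:
  assumes "m \<le> k" "k < n" "\<And>i. m \<le> i \<Longrightarrow> i < k \<Longrightarrow> f i = g i" "(f k, g k) \<in> R"
  shows "(map f [m..<n], map g [m..<n]) \<in> lexord R"
proof -
  have upt: "[m..<n] = [m..<k] @ k # [Suc k..<n]"
    using assms(1,2) upt_add_eq_append[of m k "n - k"] upt_conv_Cons[of k n] by simp
  have "map f [m..<k] = map g [m..<k]"
    using assms(3) by simp
  then have "map f [m..<n] = map f [m..<k] @ f k # map f [Suc k..<n]"
    "map g [m..<n] = map f [m..<k] @ g k # map g [Suc k..<n]"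
    unfolding upt by simp_all
  then show ?thesis
    unfolding lexord_def using assms(4) by blast
qed

definition level_degree_sum :: "'w set \<Rightarrow> 'w set set \<Rightarrow> 'w \<Rightarrow> nat \<Rightarrow> nat" where
  "level_degree_sum VB B r i = (\<Sum>w\<in>{w \<in> VB. level VB B r w = i}. deg B w)"

locale subtree_move = rooted_tree +
  fixes x v :: 'a
  assumes x_in: "x \<in> VB" and x_not_root: "x \<noteq> r"
    and v_in: "v \<in> VB" and v_outside: "x \<notin> set (root_path v)"
begin

abbreviation moved :: "'a set set" where
  "moved \<equiv> rehang B x (parent x) v"

definition moved_depth :: "'a \<Rightarrow> nat" where
  "moved_depth w = (if x \<in> set (root_path w) then depth w - depth x + depth v + 1 else depth w)"

lemma moved_depth_x: "moved_depth x = depth v + 1"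
  using root_path_Cons[OF x_in] by (metis list.set_intros(1) moved_depth_def diff_self_eq_0 add_0)

lemma moved_depth_v: "moved_depth v = depth v"
  using v_outside by (simp add: moved_depth_def)

lemma moved_edges_descend:
  "\<forall>e\<in>moved. \<exists>w. e = {w, (if w = x then v else parent w)} \<and>
     moved_depth (if w = x then v else parent w) < moved_depth w"
proof
  fix e assume "e \<in> moved"
  then consider "e = {v, x}" | "e \<in> B" "e \<noteq> {x, parent x}"
    by (auto simp: rehang_def)
  then show "\<exists>w. e = {w, (if w = x then v else parent w)} \<and>
     moved_depth (if w = x then v else parent w) < moved_depth w"
  proof cases
    case 1
    then show ?thesis
      using moved_depth_x moved_depth_v by (intro exI[of _ x]) (simp add: insert_commute)
  next
    case 2
    then obtain w where w: "w \<in> VB" "w \<noteq> r" "e = {w, parent w}"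
      using edge_to_parent by metis
    then have "w \<noteq> x"
      using 2 by blast
    have path_w: "root_path w = w # root_path (parent w)" and "parent w \<in> VB"
      using root_path_parent[OF w(1,2)] by simp_all
    moreover have "depth w = depth (parent w) + 1"
      using depth_parent w(1,2) .
    moreover have "depth x \<le> depth (parent w)" if "x \<in> set (root_path (parent w))"
      using depth_le_if_in_root_path[OF \<open>parent w \<in> VB\<close> that] .
    moreover have "x \<in> set (root_path w) \<longleftrightarrow> x \<in> set (root_path (parent w))"
      using path_w \<open>w \<noteq> x\<close> by (metis set_ConsD list.set_intros(2))
    ultimately have "moved_depth (parent w) < moved_depth w"
      by (auto simp: moved_depth_def)
    then show ?thesis
      using w(3) \<open>w \<noteq> x\<close> by (intro exI[of _ w]) simp
  qed
qed

lemma moved_acyclic: "\<not> has_cycle VB moved"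
  using moved_edges_descend by (rule no_cycle_if_edges_descend)

lemma walk_moved:
  assumes "walk VB B xs" "\<not> {x, parent x} \<subseteq> set xs"
  shows "walk VB moved xs"
  using walk_Diff_edge[OF assms] by (rule walk_mono) (auto simp: rehang_def)

lemma root_path_disjoint_subtree:
  assumes "w \<in> VB" "root_path w = A @ root_path x"
  shows "set A \<inter> set (root_path v) = {}"
proof (intro equals0I)
  fix y assume y: "y \<in> set A \<inter> set (root_path v)"
  then obtain A1 A2 where "A = A1 @ y # A2"
    by (meson IntD1 split_list)
  then have "root_path y = y # A2 @ root_path x"
    using root_path_split[of w A1 y "A2 @ root_path x"] assms by simp
  moreover have "x \<in> set (root_path x)"
    using root_path_Cons[OF x_in] by (metis list.set_intros(1))
  moreover obtain C where "root_path v = C @ root_path y"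
    using root_path_suffix v_in y by blast
  ultimately have "x \<in> set (root_path v)"
    by simp
  then show False
    using v_outside by contradiction
qed

lemma gpath_moved_reroute:
  assumes "w \<in> VB" "root_path w = A @ root_path x"
  shows "gpath VB moved (A @ x # root_path v)"
proof -
  have path_x: "root_path x = x # root_path (parent x)"
    using root_path_parent x_in x_not_root by blast
  obtain t where t: "root_path (parent x) = parent x # t"
    using root_path_Cons root_path_parent(2) x_in x_not_root by blast
  have dist: "distinct (A @ x # root_path (parent x))"
    using root_path(1)[OF assms(1)] assms(2) path_x by (simp add: gpath_def)
  have "walk VB B (A @ [x])"
    using root_path(1)[OF assms(1)] assms(2) path_x walk_append_iff[of VB B A x "root_path (parent x)"]
    by (simp add: gpath_def)
  moreover have "parent x \<notin> set (A @ [x])"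
  proof -
    have "parent x \<in> set (root_path (parent x))"
      using t by simp
    then show ?thesis
      using dist by auto
  qed
  ultimately have "walk VB moved (A @ [x])"
    using walk_moved by blast
  moreover obtain s where s: "root_path v = v # s"
    using root_path_Cons v_in by blast
  have "walk VB moved (root_path v)"
    using root_path(1)[OF v_in] v_outside by (auto simp: gpath_def intro: walk_moved)
  moreover have "{x, v} \<in> moved"
    by (auto simp: rehang_def)
  ultimately have "walk VB moved (A @ x # root_path v)"
    using walk_append_iff[of VB moved A x "root_path v"] x_in s by simp
  moreover have "distinct (A @ x # root_path v)"
    using dist v_outside root_path(1)[OF v_in] root_path_disjoint_subtree[OF assms]
    by (auto simp: gpath_def)
  ultimately show ?thesis
    by (simp add: gpath_def)
qed

lemma moved_path:
  assumes "w \<in> VB"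
  obtains Q where "gpath VB moved Q" "hd Q = w" "last Q = r" "length Q = moved_depth w"
proof (cases "x \<in> set (root_path w)")
  case False
  then have "walk VB moved (root_path w)"
    using root_path(1)[OF assms] by (auto simp: gpath_def intro: walk_moved)
  then show ?thesis
    using that[of "root_path w"] root_path[OF assms] False
    by (simp add: gpath_def moved_depth_def depth_eq_length)
next
  case True
  obtain A where A: "root_path w = A @ root_path x"
    using root_path_suffix assms True by blast
  obtain t where t: "root_path x = x # t"
    using root_path_Cons x_in by blast
  obtain s where s: "root_path v = v # s"
    using root_path_Cons v_in by blast
  have "hd (A @ x # root_path v) = hd (A @ root_path x)"
    by (cases A) (simp_all add: t)
  also have "\<dots> = w"
    using root_path(2)[OF assms] A by metis
  finally have "hd (A @ x # root_path v) = w" .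
  moreover have "last (A @ x # root_path v) = r"
    using root_path(3)[OF v_in] s by simp
  moreover have "length (A @ x # root_path v) = moved_depth w"
    using A True by (simp add: moved_depth_def depth_eq_length)
  ultimately show ?thesis
    using that gpath_moved_reroute[OF assms A] by blast
qed

lemma moved_rooted_tree: "rooted_tree VB moved r"
proof
  have "v \<noteq> x"
    using v_outside root_path_Cons[OF v_in] by force
  then show "moved \<subseteq> {{a, b} | a b. a \<in> VB \<and> b \<in> VB \<and> a \<noteq> b}"
    using edges_proper x_in v_in by (auto simp: rehang_def)
  have "\<exists>Q. walk VB moved Q \<and> hd Q = w \<and> last Q = r" if w: "w \<in> VB" for w
  proof -
    obtain Q where "gpath VB moved Q" "hd Q = w" "last Q = r"
      using moved_path[OF w] by blast
    then show ?thesis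
      by (auto simp: gpath_def)
  qed
  then have "gconnected VB moved"
    by (intro gconnected_if_walks_to) blast
  then show "is_tree VB moved"
    using moved_acyclic by (simp add: is_tree_def)
qed (rule root_in)

lemma depth_moved:
  assumes "w \<in> VB"
  shows "level VB moved r w = moved_depth w"
proof -
  obtain Q where Q: "gpath VB moved Q" "hd Q = w" "last Q = r" "length Q = moved_depth w"
    using moved_path assms by blast
  then have "tree_path VB moved w r = Q"
    by (intro rooted_tree.root_path_eqI[OF moved_rooted_tree])
  then show ?thesis
    using Q(4) by (simp add: level_def)
qed

lemma new_edge_not_in_tree:
  assumes "v \<noteq> parent x"
  shows "{v, x} \<notin> B"
proof
  assume "{v, x} \<in> B"
  then obtain w where w: "w \<in> VB" "w \<noteq> r" "{v, x} = {w, parent w}"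
    using edge_to_parent by blast
  then consider "v = w" "x = parent w" | "x = w" "v = parent w"
    by (auto simp: doubleton_eq_iff)
  then show False
  proof cases
    case 1
    then have "x \<in> set (root_path v)"
      using root_path_parent(1)[OF w(1,2)] by (metis list.set_intros(1,2) root_path_Cons root_path_parent(2) w(1,2))
    then show False
      using v_outside by contradiction
  next
    case 2
    then show False
      using assms by simp
  qed
qed

lemma deg_moved:
  assumes "finite VB" "v \<noteq> parent x" "w \<noteq> x" "w \<noteq> parent x"
  shows "deg moved w = deg B w + (if w = v then 1 else 0)"
proof (cases "w = v")
  case True
  then have "{e \<in> moved. w \<in> e} = insert {v, x} {e \<in> B. w \<in> e}"
    using assms(3,4) by (auto simp: rehang_def)
  then show ?thesis
    using True new_edge_not_in_tree[OF assms(2)] finite_edges[OF assms(1)] by (simp add: deg_def)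
next
  case False
  then have "{e \<in> moved. w \<in> e} = {e \<in> B. w \<in> e}"
    using assms(3,4) by (auto simp: rehang_def)
  then show ?thesis
    using False by (simp add: deg_def)
qed

lemma level_moved_iff_shallow:
  assumes "depth v < depth x" "w \<in> VB" "i \<le> depth v"
  shows "level VB moved r w = i \<longleftrightarrow> depth w = i"
proof (cases "x \<in> set (root_path w)")
  case True
  then have "depth x \<le> depth w"
    using depth_le_if_in_root_path[OF assms(2)] by simp
  then show ?thesis
    using True assms depth_moved by (simp add: moved_depth_def)
next
  case False
  then show ?thesis
    using assms(2) depth_moved by (simp add: moved_depth_def)
qed

lemma level_degree_sum_moved:
  assumes fin: "finite VB" and "v \<noteq> parent x" "depth v < depth (parent x)" "i \<le> depth v"
  shows "level_degree_sum VB moved r i = level_degree_sum VB B r i + (if i = depth v then 1 else 0)"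
proof -
  let ?S = "{w \<in> VB. depth w = i}"
  have depth_x: "depth x = depth (parent x) + 1"
    using depth_parent x_in x_not_root by simp
  then have "{w \<in> VB. level VB moved r w = i} = ?S"
    using level_moved_iff_shallow assms(3,4) by auto
  then have "level_degree_sum VB moved r i = (\<Sum>w\<in>?S. deg moved w)"
    by (simp add: level_degree_sum_def)
  also have "\<dots> = (\<Sum>w\<in>?S. deg B w + (if w = v then 1 else 0))"
  proof (rule sum.cong)
    fix w assume "w \<in> ?S"
    then have "w \<noteq> x" "w \<noteq> parent x"
      using assms(3,4) depth_x by auto
    then show "deg moved w = deg B w + (if w = v then 1 else 0)"
      by (rule deg_moved[OF fin assms(2)])
  qed simp
  also have "\<dots> = level_degree_sum VB B r i + (if i = depth v then 1 else 0)"
    using fin v_in by (simp add: sum.distrib level_degree_sum_def)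
  finally show ?thesis .
qed

lemma level_degree_sum_moved_lexord:
  assumes fin: "finite VB" and anc: "v \<in> set (root_path (parent x))" "v \<noteq> parent x"
  shows "(map (level_degree_sum VB B r) [1..<card VB + 1],
          map (level_degree_sum VB moved r) [1..<card VB + 1]) \<in> lexord {(a, b). a < b}"
proof -
  have "depth v < depth (parent x)"
    using depth_less_if_in_root_path root_path_parent(2) x_in x_not_root anc by blast
  then show ?thesis
    using depth_bounds[OF fin v_in] level_degree_sum_moved[OF fin anc(2)]
    by (intro lexord_map_upt[where k = "depth v"]) auto
qed

end

section \<open>The contracted graph\<close>

lemma H_edges_proper:
  assumes "E \<subseteq> {{a, b} | a b. a \<in> V \<and> b \<in> V \<and> a \<noteq> b}"
  shows "H_edges V E F \<subseteq> {{a, b} | a b. a \<in> H_vertices V E F \<and> b \<in> H_vertices V E F \<and> a \<noteq> b}"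
proof
  fix e assume "e \<in> H_edges V E F"
  then consider (nontree) a b where "e = {Inr a, Inr b}" "a \<in> V - F" "b \<in> V - F" "{a, b} \<in> E"
    | (tree) a T where "e = {Inr a, Inl T}" "a \<in> V - F" "T \<in> forest_trees E F"
    unfolding H_edges_def by blast
  then show "e \<in> {{a, b} | a b. a \<in> H_vertices V E F \<and> b \<in> H_vertices V E F \<and> a \<noteq> b}"
  proof cases
    case nontree
    then have "a \<noteq> b"
      using assms by (auto simp: doubleton_eq_iff)
    then show ?thesis
      using nontree by (auto simp: H_vertices_def)
  next
    case tree
    then show ?thesis
      by (auto simp: H_vertices_def)
  qed
qed

lemma two_edges_subset_H_edges: "two_edges V E F \<subseteq> H_edges V E F"
proof
  fix e assume "e \<in> two_edges V E F"
  then obtain a T where e: "e = {Inr a, Inl T}" "a \<in> V - F" "T \<in> forest_trees E F"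
    and "2 \<le> card {t \<in> T. {a, t} \<in> E}"
    unfolding two_edges_def by blast
  then have "{t \<in> T. {a, t} \<in> E} \<noteq> {}"
    by (metis card.empty not_numeral_le_zero)
  then show "e \<in> H_edges V E F"
    using e unfolding H_edges_def by blast
qed

lemma finite_H_vertices:
  assumes "finite V" "F \<subseteq> V"
  shows "finite (H_vertices V E F)"
proof -
  have "forest_trees E F \<subseteq> Pow F"
    by (auto simp: forest_trees_def components_def)
  then show ?thesis
    using assms finite_subset by (auto simp: H_vertices_def intro: finite_subset)
qed

lemma skeleton_rooted_tree:
  assumes "E \<subseteq> {{a, b} | a b. a \<in> V \<and> b \<in> V \<and> a \<noteq> b}" "skeleton V E F B r"
  shows "rooted_tree (H_vertices V E F) B r"
proof
  have "B \<subseteq> H_edges V E F"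
    using assms(2) by (simp add: skeleton_def)
  then show "B \<subseteq> {{a, b} | a b. a \<in> H_vertices V E F \<and> b \<in> H_vertices V E F \<and> a \<noteq> b}"
    using H_edges_proper[OF assms(1)] by (rule subset_trans)
  show "is_tree (H_vertices V E F) B" "r \<in> H_vertices V E F"
    using assms(2) by (auto simp: skeleton_def H_vertices_def)
qed

lemma config_eq:
  "config V E F B r = card (B \<inter> two_edges V E F) #
     map (level_degree_sum (H_vertices V E F) B r) [1..<card (H_vertices V E F) + 1]"
  by (simp add: config_def level_degree_sum_def)

lemma skeleton_inner_tree_path:
  assumes "E \<subseteq> {{a, b} | a b. a \<in> V \<and> b \<in> V \<and> a \<noteq> b}" "finite V" "F \<subseteq> V"
    and "skeleton V E F B r" "T \<in> forest_trees E F"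
  shows "tree_path (inner_vertices V E F B) (inner_edges V E F B) (Inl T) r =
    tree_path (H_vertices V E F) B (Inl T) r"
proof -
  interpret rooted_tree "H_vertices V E F" B r
    using skeleton_rooted_tree assms(1,4) .
  have "r \<notin> Inr ` (V - F)"
    using assms(4) by (auto simp: skeleton_def)
  then show ?thesis
    unfolding inner_edges_def inner_vertices_def
    using assms(5) finite_H_vertices[OF assms(2,3)]
    by (intro tree_path_remove_leaves) (auto simp: H_vertices_def)
qed

theorem lemma25:
  fixes V :: "'v set" and E :: "'v set set" and F :: "'v set"
    and B :: "('v set + 'v) set set" and r :: "'v set + 'v"
    and u :: 'v and T1 :: "'v set"
  assumes finV: "finite V"
    and simple: "E \<subseteq> {{a, b} | a b. a \<in> V \<and> b \<in> V \<and> a \<noteq> b}"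
    and conn: "gconnected V E"
    and forest: "induced_forest V E F"
    and maximum: "\<forall>X. induced_forest V E X \<longrightarrow> card X \<le> card F"
    and fewest: "\<forall>X. induced_forest V E X \<and> card X = card F \<longrightarrow>
                    card (forest_trees E F) \<le> card (forest_trees E X)"
    and skel: "skeleton V E F B r"
    and highest: "\<forall>B' r'. skeleton V E F B' r' \<longrightarrow>
                    (config V E F B r, config V E F B' r') \<notin> lexord {(a, b). a < b}"
    and u_nontree: "u \<in> V - F"
    and T1: "T1 \<in> forest_trees E F"
    and desc: "descendant (inner_vertices V E F B) (inner_edges V E F B) r (Inr u) (Inl T1)"
    and two: "{Inr u, Inl T1} \<in> two_edges V E F"
  shows "child (inner_vertices V E F B) (inner_edges V E F B) r (Inr u) (Inl T1)"
proof (rule ccontr)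
  assume not_child: "\<not> child (inner_vertices V E F B) (inner_edges V E F B) r (Inr u) (Inl T1)"
  have F_sub: "F \<subseteq> V"
    using forest by (simp add: induced_forest_def)
  have fin: "finite (H_vertices V E F)"
    using finite_H_vertices[OF finV F_sub] .
  interpret rooted_tree "H_vertices V E F" B r
    using skeleton_rooted_tree[OF simple skel] .
  have x_in: "Inl T1 \<in> H_vertices V E F" and v_in: "Inr u \<in> H_vertices V E F"
    using T1 u_nontree by (auto simp: H_vertices_def)
  note via_root_path = descendant_via_root_path
    [OF skeleton_inner_tree_path[OF simple finV F_sub skel T1] desc x_in]
  then have x_not_root: "Inl T1 \<noteq> r" and anc: "Inr u \<in> set (root_path (parent (Inl T1)))"
    and not_parent: "Inr u \<noteq> parent (Inl T1)"
    using not_child by simp_all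
  interpret subtree_move "H_vertices V E F" B r "Inl T1" "Inr u"
    using x_in x_not_root v_in not_in_root_path_of_ancestor[OF x_in x_not_root anc]
    by unfold_locales
  have "skeleton V E F moved r"
    using skel rooted_tree.tree[OF moved_rooted_tree] two two_edges_subset_H_edges
    by (auto simp: skeleton_def rehang_def)
  moreover have "(config V E F B r, config V E F moved r) \<in> lexord {(a, b). a < b}"
    using card_Int_rehang_ge[where p = "parent (Inl T1)",
        OF finite_edges[OF fin] two new_edge_not_in_tree[OF not_parent]]
      level_degree_sum_moved_lexord[OF fin anc not_parent]
    unfolding config_eq by auto
  ultimately show False
    using highest by blast
qed

end
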